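(* Let $X\in\mathbb{R}^{n\times p}$, $y\in\mathbb{R}^n$, $\lambda\ge0$, $\mu>0$, $A=X^\top X$, $\eta=\lambda_{\max}(\mu A^\top A)+1$, $K\ge1$ and a partition $I_1,\dots,I_K$ of $\{1,\dots,p\}$ into nonempty sets. Let $\{g^t=(\beta^t,z^t,u^t)\}_{t\ge0}$ be generated by Algorithm 1 or by Algorithm 2 (defined below) from an arbitrary initial point, and assume the set $\Omega^*$ of saddle points of the Lagrangian $L$ (defined below) is nonempty. Then: (1) (Global convergence) $g^t$ converges to some $g^*=(\beta^*,z^*,u^* )\in\Omega^*$; (2) (Rate) for every integer $T>0$, $$\|g^T-g^{T+1}\|_{H}^2\le \frac{1}{T+1}\|g^0-g^*\|_H^2,$$ where $H$ is the positive definite matrix defined below.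
   Context: Notation: $\mathcal{S}_\tau(v)=\mathrm{sign}(v)\odot\max\{|v|-\tau,0\}$ (componentwise soft thresholding); $\lambda_{\max}$ is the largest eigenvalue; $\|v\|_H=\sqrt{v^\top Hv}$. $X_i$ is the submatrix of $X$ with columns in $I_i$, $A_i=X^\top X_i$, $\beta_{i\cdot}$ is the subvector of $\beta$ indexed by $I_i$ (so $A\beta=\sum_iA_i\beta_{i\cdot}$). Let $\mathcal{Z}_0=\{z\in\mathbb{R}^p:\|z\|_\infty\le n\lambda\}$ and $\delta_{\mathcal{Z}_0}(z)=0$ if $z\in\mathcal{Z}_0$, $+\infty$ otherwise. The Lagrangian is $L(\beta,z;u)=\|\beta\|_1+\delta_{\mathcal{Z}_0}(z)-u^\top(A\beta-z-X^\top y)$ on $\mathbb{R}^p\times\mathbb{R}^p\times\mathbb{R}^p$; $\Omega^*$ is the set of $(\beta^*,z^*,u^* )$ with $L(\beta^*,z^*,u)\le L(\beta^*,z^*,u^* )\le L(\beta,z,u^* )$ for all $(\beta,z,u)$. Algorithm 1, for $t\ge0$: $\beta^{t+1}=\mathcal{S}_{1/\eta}(\beta^t+A^\top u^t/\eta)$; $z^{t+1}=\min\{\max\{z^t-u^t/\mu,-n\lambda\},n\lambda\}$; $u^{t+1}=u^t-\frac{\mu}{2}[2(A\beta^{t+1}-z^{t+1}-X^\top y)-(A\beta^t-z^t-X^\top y)]$. Algorithm 2, for $t\ge0$: $\beta^{t+1}_{i\cdot}=\mathcal{S}_{1/\eta}(\beta^t_{i\cdot}+A_i^\top u^t/\eta)$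 for $i=1,\dots,K$; $z^{t+1}$ as in Algorithm 1; $u^{t+1}=u^t-\frac{\mu}{2}[2(\sum_iA_i\beta^{t+1}_{i\cdot}-z^{t+1}-X^\top y)-(\sum_iA_i\beta^{t}_{i\cdot}-z^t-X^\top y)]$. The matrix $H\in\mathbb{R}^{3p\times3p}$ (acting on $g=(\beta,z,u)$) is $$H=\begin{pmatrix}\mu A^\top A+S & 0 & A^\top\\ 0 & \mu I_p & -I_p\\ A & -I_p & \frac{2}{\mu}I_p\end{pmatrix},\qquad S=\eta I_p-\mu A^\top A.$$ *)

theory Defs
  imports "HOL-Analysis.Analysis" "HOL-Library.Extended_Real"
begin

definition soft_thr :: "real \<Rightarrow> real^'p \<Rightarrow> real^'p" where
  "soft_thr \<tau> v = (\<chi> j. sgn (v $ j) * max (\<bar>v $ j\<bar> - \<tau>) 0)"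

definition lambda_max :: "real^'p^'p \<Rightarrow> real" where
  "lambda_max M = Max {c. \<exists>v. v \<noteq> 0 \<and> M *v v = c *\<^sub>R v}"

definition clip :: "real \<Rightarrow> real^'p \<Rightarrow> real^'p" where
  "clip c v = (\<chi> j. min (max (v $ j) (- c)) c)"

definition Z0 :: "real \<Rightarrow> (real^'p) set" where
  "Z0 c = {z. \<forall>j. \<bar>z $ j\<bar> \<le> c}"

definition lagr :: "real^'p^'n \<Rightarrow> real^'n \<Rightarrow> real \<Rightarrow> real^'p \<Rightarrow> real^'p \<Rightarrow> real^'p \<Rightarrow> ereal" where
  "lagr X y lam \<beta> z u =
     (if z \<in> Z0 (real CARD('n) * lam)
      then ereal ((\<Sum>j\<in>UNIV. \<bar>\<beta> $ j\<bar>)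
                  - u \<bullet> ((transpose X ** X) *v \<beta> - z - transpose X *v y))
      else \<infinity>)"

definition saddle_set :: "real^'p^'n \<Rightarrow> real^'n \<Rightarrow> real \<Rightarrow> ((real^'p) \<times> (real^'p) \<times> (real^'p)) set" where
  "saddle_set X y lam = {(\<beta>s, zs, us).
     \<forall>\<beta> z u. lagr X y lam \<beta>s zs u \<le> lagr X y lam \<beta>s zs us
            \<and> lagr X y lam \<beta>s zs us \<le> lagr X y lam \<beta> z us}"

definition eta_of :: "real^'p^'n \<Rightarrow> real \<Rightarrow> real" where
  "eta_of X \<mu> = lambda_max (\<mu> *\<^sub>R (transpose (transpose X ** X) ** (transpose X ** X))) + 1"

text \<open>Restriction of a vector to the index block I (zero elsewhere); used to
  express subvectors beta_{i.} and the products A_i beta_{i.}, A_i^T u.\<close>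
definition blk :: "'p set \<Rightarrow> real^'p \<Rightarrow> real^'p" where
  "blk I v = (\<chi> j. if j \<in> I then v $ j else 0)"

definition alg1_step ::
  "real^'p^'n \<Rightarrow> real^'n \<Rightarrow> real \<Rightarrow> real \<Rightarrow>
   ((real^'p) \<times> (real^'p) \<times> (real^'p)) \<Rightarrow> ((real^'p) \<times> (real^'p) \<times> (real^'p)) \<Rightarrow> bool" where
  "alg1_step X y lam \<mu> g g' =
     (let A = transpose X ** X; \<eta> = eta_of X \<mu>; c = real CARD('n) * lam;
          (\<beta>, z, u) = g; (\<beta>', z', u') = g' in
      \<beta>' = soft_thr (1 / \<eta>) (\<beta> + (1 / \<eta>) *\<^sub>R (transpose A *v u)) \<and>
      z' = clip c (z - (1 / \<mu>) *\<^sub>R u) \<and>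
      u' = u - (\<mu> / 2) *\<^sub>R (2 *\<^sub>R (A *v \<beta>' - z' - transpose X *v y)
                               - (A *v \<beta> - z - transpose X *v y)))"

text \<open>One step of Algorithm 2 (block version, blocks I 1, ..., I K).
  A_i beta_{i.} is A *v blk (I i) beta; (A_i^T u) as a subvector indexed by I i
  is blk (I i) (A^T u).\<close>
definition alg2_step ::
  "real^'p^'n \<Rightarrow> real^'n \<Rightarrow> real \<Rightarrow> real \<Rightarrow> nat \<Rightarrow> (nat \<Rightarrow> 'p set) \<Rightarrow>
   ((real^'p) \<times> (real^'p) \<times> (real^'p)) \<Rightarrow> ((real^'p) \<times> (real^'p) \<times> (real^'p)) \<Rightarrow> bool" where
  "alg2_step X y lam \<mu> K I g g' =
     (let A = transpose X ** X; \<eta> = eta_of X \<mu>; c = real CARD('n) * lam;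
          (\<beta>, z, u) = g; (\<beta>', z', u') = g' in
      (\<forall>i\<in>{1..K}. blk (I i) \<beta>' =
          blk (I i) (soft_thr (1 / \<eta>) (blk (I i) \<beta> + (1 / \<eta>) *\<^sub>R blk (I i) (transpose A *v u)))) \<and>
      z' = clip c (z - (1 / \<mu>) *\<^sub>R u) \<and>
      u' = u - (\<mu> / 2) *\<^sub>R
             (2 *\<^sub>R ((\<Sum>i\<in>{1..K}. A *v blk (I i) \<beta>') - z' - transpose X *v y)
              - ((\<Sum>i\<in>{1..K}. A *v blk (I i) \<beta>) - z - transpose X *v y)))"

text \<open>Squared H-norm g^T H g of g = (beta, z, u), with the block matrix
  H = [[mu A^T A + S, 0, A^T], [0, mu I, -I], [A, -I, (2/mu) I]], S = eta I - mu A^T A.\<close>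
definition Hnorm2 :: "real^'p^'n \<Rightarrow> real \<Rightarrow> ((real^'p) \<times> (real^'p) \<times> (real^'p)) \<Rightarrow> real" where
  "Hnorm2 X \<mu> g =
     (let A = transpose X ** X; \<eta> = eta_of X \<mu>;
          S = \<eta> *\<^sub>R mat 1 - \<mu> *\<^sub>R (transpose A ** A);
          H11 = \<mu> *\<^sub>R (transpose A ** A) + S;
          (\<beta>, z, u) = g in
      \<beta> \<bullet> (H11 *v \<beta>) + \<beta> \<bullet> (transpose A *v u)
      + \<mu> * (z \<bullet> z) - z \<bullet> u
      + u \<bullet> (A *v \<beta>) - u \<bullet> z + (2 / \<mu>) * (u \<bullet> u))"

end

(*
  Each step of the iteration is a prox step for the l1-norm (soft thresholding), a projection
  onto Z0 (clipping) and a dual update. Their optimality conditions combine into the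
  variational inequality
    H(g' - w, g' - g) <= theta(w) - theta(g') + (w - g') . F(g')
  for every w with z-component in Z0, where theta is the l1-norm of the beta-component and
  F(beta, z, u) = (- A^T u, u, A beta - z - X^T y) is affine with skew-symmetric linear part.
  The right-hand side is nonpositive at a saddle point g*, which gives Fejer monotonicity
  |g^(t+1) - g*|_H^2 + |g^(t+1) - g^t|_H^2 <= |g^t - g*|_H^2; adding the inequalities of two
  consecutive steps shows that |g^(t+1) - g^t|_H is nonincreasing, and summing yields the
  O(1/T) rate. H is positive definite because eta exceeds the largest eigenvalue of
  mu A^T A. Hence the iterates are bounded, every cluster point satisfies the variational
  inequality and is a saddle point, and Fejer monotonicity with respect to it gives
  convergence of the whole sequence. Algorithm 2 performs the same step as Algorithm 1,
  since soft thresholding acts componentwise.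
*)
theory Submission
  imports Defs
begin

section \<open>Matrices and quadratic forms\<close>

lemma transpose_diff: "transpose (A - B) = transpose A - transpose (B :: real^'n^'m)"
  by (simp add: transpose_def vec_eq_iff)

lemma inner_vector_matrix: "x \<bullet> (u v* A) = u \<bullet> ((A::real^'p^'m) *v x)"
  by (metis dot_lmul_matrix inner_commute)

lemma vector_mult_2: "(x::real^'p) * 2 = 2 *\<^sub>R x"
  by (simp add: vec_eq_iff)

lemma sum_matrix_vector_mult: "(\<Sum>i\<in>S. (A::real^'p^'m) *v f i) = A *v (\<Sum>i\<in>S. f i)"
  by (induction S rule: infinite_finite_induct) (simp_all add: matrix_vector_right_distrib)

lemma continuous_on_matrix_vector_mult [continuous_intros]:
  "continuous_on S f \<Longrightarrow> continuous_on S (\<lambda>x. (A::real^'p^'m) *v f x)"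
  using bounded_linear.continuous_on[OF matrix_vector_mul_bounded_linear] by blast

lemma tendsto_matrix_vector_mult [tendsto_intros]:
  "(f \<longlongrightarrow> l) F \<Longrightarrow> ((\<lambda>x. (A::real^'p^'m) *v f x) \<longlongrightarrow> A *v l) F"
  using bounded_linear.tendsto[OF matrix_vector_mul_bounded_linear] by blast

lemma inner_matrix_vector_symmetric:
  fixes M :: "real^'n^'n"
  assumes "transpose M = M"
  shows "x \<bullet> (M *v y) = (M *v x) \<bullet> y"
  by (metis assms dot_lmul_matrix inner_commute transpose_matrix_vector)

lemma linear_coeff_zero_if_quadratic_nonneg:
  fixes a b :: real
  assumes "\<And>t. 0 \<le> a * t + b * t\<^sup>2"
  shows "a = 0"
proof (rule ccontr)
  assume "a \<noteq> 0"
  define s where "s = 1 / (\<bar>b\<bar> + 1)"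
  have s: "s > 0" "b * s < 1"
    unfolding s_def by (auto simp: field_simps abs_if)
  have "0 \<le> a * (- a * s) + b * (- a * s)\<^sup>2" by (rule assms)
  also have "\<dots> = a\<^sup>2 * s * (b * s - 1)" by (simp add: power2_eq_square algebra_simps)
  also have "\<dots> < 0" using \<open>a \<noteq> 0\<close> s by (intro mult_pos_neg) auto
  finally show False by simp
qed

lemma le_max_on_sphere_if_degree2_homogeneous:
  fixes f :: "'a::euclidean_space \<Rightarrow> real"
  assumes cont: "continuous_on UNIV f" and hom: "\<And>s x. f (s *\<^sub>R x) = s\<^sup>2 * f x"
  shows "\<exists>v. norm v = 1 \<and> (\<forall>x. f x \<le> f v * (norm x)\<^sup>2)"
proof -
  obtain e :: 'a where "e \<in> Basis" using nonempty_Basis by blast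
  then have "sphere (0::'a) 1 \<noteq> {}" by (metis mem_sphere_0 norm_Basis empty_iff)
  then obtain v where v: "v \<in> sphere 0 1" and max: "\<And>y. y \<in> sphere 0 1 \<Longrightarrow> f y \<le> f v"
    using continuous_attains_sup[OF compact_sphere _ continuous_on_subset[OF cont]] by blast
  have "f x \<le> f v * (norm x)\<^sup>2" for x
  proof (cases "x = 0")
    case True
    then show ?thesis using hom[of 0 x] by simp
  next
    case False
    have "f ((1 / norm x) *\<^sub>R x) \<le> f v" using False by (intro max) simp
    then show ?thesis using False by (simp add: hom field_simps power2_eq_square)
  qed
  then show ?thesis using v by auto
qed

lemma psd_form_zero_imp_kernel:
  fixes N :: "real^'n^'n"
  assumes sym: "transpose N = N" and psd: "\<And>x. 0 \<le> x \<bullet> (N *v x)"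
    and zero: "v \<bullet> (N *v v) = 0"
  shows "N *v v = 0"
proof -
  define w where "w = N *v v"
  have "0 \<le> (v + t *\<^sub>R w) \<bullet> (N *v (v + t *\<^sub>R w))" for t by (rule psd)
  also have "(v + t *\<^sub>R w) \<bullet> (N *v (v + t *\<^sub>R w)) = 2 * (w \<bullet> w) * t + (w \<bullet> (N *v w)) * t\<^sup>2" for t
    using zero inner_matrix_vector_symmetric[OF sym, of v w]
    by (simp add: w_def matrix_vector_right_distrib matrix_vector_mult_scaleR inner_add_left
        inner_add_right inner_commute power2_eq_square algebra_simps)
  finally have "2 * (w \<bullet> w) = 0" by (rule linear_coeff_zero_if_quadratic_nonneg)
  then show ?thesis unfolding w_def by simp
qed

lemma finite_eigenvalues_symmetric:
  fixes M :: "real^'n^'n"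
  assumes sym: "transpose M = M"
  shows "finite {c. \<exists>v. v \<noteq> 0 \<and> M *v v = c *\<^sub>R v}"
proof -
  define E where "E = {c. \<exists>v. v \<noteq> 0 \<and> M *v v = c *\<^sub>R v}"
  define e where "e c = (SOME v. v \<noteq> 0 \<and> M *v v = c *\<^sub>R v)" for c
  have e: "e c \<noteq> 0 \<and> M *v e c = c *\<^sub>R e c" if "c \<in> E" for c
  proof -
    from that have "\<exists>v. v \<noteq> 0 \<and> M *v v = c *\<^sub>R v" unfolding E_def by simp
    then show ?thesis unfolding e_def by (rule someI_ex)
  qed
  have inj: "inj_on e E"
  proof (rule inj_onI)
    fix a b assume a: "a \<in> E" and b: "b \<in> E" and eq: "e a = e b"
    have "a *\<^sub>R e a = b *\<^sub>R e a" using e[OF a] e[OF b] eq by metis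
    then show "a = b" using e[OF a] by simp
  qed
  have "pairwise orthogonal (e ` E)"
  proof (rule pairwiseI)
    fix x y assume x: "x \<in> e ` E" and y: "y \<in> e ` E" and xy: "x \<noteq> y"
    from x obtain a where a: "a \<in> E" "x = e a" by blast
    from y obtain b where b: "b \<in> E" "y = e b" by blast
    have "a * (x \<bullet> y) = (M *v x) \<bullet> y" using e[OF a(1)] a(2) by simp
    also have "\<dots> = x \<bullet> (M *v y)" by (rule inner_matrix_vector_symmetric[OF sym, symmetric])
    also have "\<dots> = b * (x \<bullet> y)" using e[OF b(1)] b(2) by simp
    finally have "(a - b) * (x \<bullet> y) = 0" by (simp add: algebra_simps)
    moreover have "a \<noteq> b" using xy a b by blast
    ultimately show "orthogonal x y" by (simp add: orthogonal_def)
  qed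
  moreover have "0 \<notin> e ` E" using e by auto
  ultimately have "independent (e ` E)" using pairwise_orthogonal_independent by blast
  then have "finite (e ` E)" using independent_bound by blast
  then show ?thesis using inj finite_imageD unfolding E_def by blast
qed

lemma quadratic_form_le_lambda_max:
  fixes M :: "real^'n^'n"
  assumes sym: "transpose M = M"
  shows "x \<bullet> (M *v x) \<le> lambda_max M * (x \<bullet> x)"
proof -
  have "continuous_on UNIV (\<lambda>x. x \<bullet> (M *v x))" by (intro continuous_intros)
  then obtain v where v: "norm v = 1" and le: "\<And>x. x \<bullet> (M *v x) \<le> (v \<bullet> (M *v v)) * (norm x)\<^sup>2"
    using le_max_on_sphere_if_degree2_homogeneous[of "\<lambda>x. x \<bullet> (M *v x)"]
    by (auto simp: matrix_vector_mult_scaleR power2_eq_square)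
  define c where "c = v \<bullet> (M *v v)"
  \<comment> \<open>the maximiser \<open>v\<close> of the Rayleigh quotient is an eigenvector for \<open>c\<close>\<close>
  define N where "N = c *\<^sub>R mat 1 - M"
  have Nx: "x \<bullet> (N *v x) = c * (x \<bullet> x) - x \<bullet> (M *v x)" for x
    by (simp add: N_def matrix_vector_mult_diff_rdistrib inner_diff_right scaleR_matrix_vector_assoc[symmetric])
  have "N *v v = 0"
  proof (rule psd_form_zero_imp_kernel)
    show "transpose N = N" using sym by (simp add: N_def transpose_diff transpose_scalar)
    show "0 \<le> x \<bullet> (N *v x)" for x using le[of x] by (simp add: Nx c_def dot_square_norm)
    show "v \<bullet> (N *v v) = 0" using v by (simp add: Nx c_def dot_square_norm)
  qed
  then have "M *v v = c *\<^sub>R v"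
    by (simp add: N_def matrix_vector_mult_diff_rdistrib scaleR_matrix_vector_assoc[symmetric])
  moreover have "v \<noteq> 0" using v by auto
  ultimately have "c \<le> lambda_max M"
    unfolding lambda_max_def by (intro Max_ge finite_eigenvalues_symmetric sym) auto
  then have "c * (x \<bullet> x) \<le> lambda_max M * (x \<bullet> x)" by (simp add: mult_right_mono)
  then show ?thesis using le[of x] by (simp add: c_def dot_square_norm)
qed

section \<open>Soft thresholding and clipping\<close>

definition l1_norm :: "real^'p \<Rightarrow> real" where
  "l1_norm v = (\<Sum>j\<in>UNIV. \<bar>v $ j\<bar>)"

lemma soft_thr_prox_real:
  fixes \<tau> a v :: real
  assumes "\<tau> > 0"
  defines "p \<equiv> sgn v * max (\<bar>v\<bar> - \<tau>) 0"
  shows "(a - p) * (v - p) \<le> \<tau> * (\<bar>a\<bar> - \<bar>p\<bar>)"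
proof -
  consider "\<bar>v\<bar> \<le> \<tau>" | "v > \<tau>" | "v < - \<tau>" by linarith
  then show ?thesis
  proof cases
    case 1
    then have "p = 0" by (simp add: p_def)
    moreover have "a * v \<le> \<tau> * \<bar>a\<bar>"
      using 1 abs_ge_self[of "a * v"] mult_left_mono[OF 1, of "\<bar>a\<bar>"]
      by (simp add: abs_mult mult.commute)
    ultimately show ?thesis by simp
  next
    case 2
    then have "p = v - \<tau>" using assms by (simp add: p_def)
    then show ?thesis using 2 assms mult_left_mono[OF abs_ge_self, of \<tau> a] by (simp add: algebra_simps)
  next
    case 3
    then have "p = v + \<tau>" using assms by (simp add: p_def)
    then show ?thesis using 3 assms mult_left_mono[OF abs_ge_minus_self, of \<tau> a] by (simp add: algebra_simps)
  qed
qed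

lemma soft_thr_prox:
  assumes "\<tau> > 0"
  shows "(w - soft_thr \<tau> v) \<bullet> (v - soft_thr \<tau> v) \<le> \<tau> * (l1_norm w - l1_norm (soft_thr \<tau> v))"
proof -
  have "(w - soft_thr \<tau> v) \<bullet> (v - soft_thr \<tau> v)
      = (\<Sum>j\<in>UNIV. (w$j - sgn (v$j) * max (\<bar>v$j\<bar> - \<tau>) 0) * (v$j - sgn (v$j) * max (\<bar>v$j\<bar> - \<tau>) 0))"
    by (simp add: inner_vec_def soft_thr_def)
  also have "\<dots> \<le> (\<Sum>j\<in>UNIV. \<tau> * (\<bar>w$j\<bar> - \<bar>sgn (v$j) * max (\<bar>v$j\<bar> - \<tau>) 0\<bar>))"
    by (intro sum_mono soft_thr_prox_real assms)
  also have "\<dots> = \<tau> * (l1_norm w - l1_norm (soft_thr \<tau> v))"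
    by (simp add: l1_norm_def soft_thr_def sum_distrib_left sum_subtractf right_diff_distrib)
  finally show ?thesis .
qed

lemma clip_projection:
  assumes "w \<in> Z0 c"
  shows "(w - clip c v) \<bullet> (v - clip c v) \<le> 0"
proof -
  have "(w $ j - min (max (v $ j) (- c)) c) * (v $ j - min (max (v $ j) (- c)) c) \<le> 0" for j
  proof -
    have "\<bar>w $ j\<bar> \<le> c" using assms by (simp add: Z0_def)
    then consider "v $ j \<le> - c" | "v $ j \<ge> c" | "\<bar>v $ j\<bar> < c" by linarith
    then show ?thesis
    proof cases
      case 1 then show ?thesis using \<open>\<bar>w $ j\<bar> \<le> c\<close> by (simp add: mult_nonneg_nonpos)
    next
      case 2 then show ?thesis using \<open>\<bar>w $ j\<bar> \<le> c\<close> by (simp add: mult_nonpos_nonneg)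
    next
      case 3 then show ?thesis by simp
    qed
  qed
  then show ?thesis by (simp add: inner_vec_def clip_def sum_nonpos)
qed

lemma clip_in_Z0: "c \<ge> 0 \<Longrightarrow> clip c v \<in> Z0 c"
  by (auto simp: clip_def Z0_def)

lemma zero_in_Z0: "c \<ge> 0 \<Longrightarrow> 0 \<in> Z0 c"
  by (simp add: Z0_def)

lemma closed_Z0: "closed (Z0 c :: (real^'p) set)"
  unfolding Z0_def by (intro closed_Collect_all closed_Collect_le continuous_intros)

section \<open>The inner product defined by H\<close>

type_synonym 'p triple = "(real^'p) \<times> (real^'p) \<times> (real^'p)"

text \<open>The bilinear form of the matrix \<open>H\<close>; its upper left block is \<open>\<mu> A\<^sup>T A + S = \<eta> I\<close>.\<close>

definition H_inner :: "real^'p^'p \<Rightarrow> real \<Rightarrow> real \<Rightarrow> 'p triple \<Rightarrow> 'p triple \<Rightarrow> real" where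
  "H_inner A \<eta> \<mu> = (\<lambda>(\<beta>, z, u) (\<beta>', z', u').
     \<eta> * (\<beta> \<bullet> \<beta>') + u' \<bullet> (A *v \<beta>) + u \<bullet> (A *v \<beta>') + \<mu> * (z \<bullet> z') - z \<bullet> u' - u \<bullet> z'
     + (2 / \<mu>) * (u \<bullet> u'))"

lemma H_inner_commute: "H_inner A \<eta> \<mu> g h = H_inner A \<eta> \<mu> h g"
  unfolding H_inner_def by (simp add: case_prod_beta inner_commute algebra_simps)

lemma H_inner_diff_left: "H_inner A \<eta> \<mu> (x - y) h = H_inner A \<eta> \<mu> x h - H_inner A \<eta> \<mu> y h"
  unfolding H_inner_def
  by (simp add: case_prod_beta inner_diff_left inner_diff_right matrix_vector_mult_diff_distrib
      diff_divide_distrib algebra_simps)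

lemma H_inner_diff_right: "H_inner A \<eta> \<mu> h (x - y) = H_inner A \<eta> \<mu> h x - H_inner A \<eta> \<mu> h y"
  by (simp add: H_inner_commute[of A \<eta> \<mu> h] H_inner_diff_left)

lemma H_inner_minus_left: "H_inner A \<eta> \<mu> (- x) h = - H_inner A \<eta> \<mu> x h"
  using H_inner_diff_left[of A \<eta> \<mu> 0 x h] by (simp add: H_inner_def case_prod_beta)

lemma H_inner_diff_swap: "H_inner A \<eta> \<mu> (x - y) (x - y) = H_inner A \<eta> \<mu> (y - x) (y - x)"
  by (simp add: H_inner_diff_left H_inner_diff_right H_inner_commute)

lemma H_inner_zero_right [simp]: "H_inner A \<eta> \<mu> h 0 = 0"
  unfolding H_inner_def by (simp add: case_prod_beta)

lemma H_inner_scaleR: "H_inner A \<eta> \<mu> (s *\<^sub>R g) (s *\<^sub>R g) = s\<^sup>2 * H_inner A \<eta> \<mu> g g"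
  unfolding H_inner_def
  by (simp add: case_prod_beta matrix_vector_mult_scaleR algebra_simps power2_eq_square)

lemma H_inner_square_diff:
  "H_inner A \<eta> \<mu> (a - d) (a - d) = H_inner A \<eta> \<mu> a a - 2 * H_inner A \<eta> \<mu> a d + H_inner A \<eta> \<mu> d d"
  by (simp add: H_inner_diff_left H_inner_diff_right H_inner_commute[of A \<eta> \<mu> d a])

lemma continuous_on_H_inner [continuous_intros]:
  "continuous_on S f \<Longrightarrow> continuous_on S g \<Longrightarrow> continuous_on S (\<lambda>x. H_inner A \<eta> \<mu> (f x) (g x))"
  unfolding H_inner_def case_prod_beta by (intro continuous_intros)

lemma tendsto_H_inner [tendsto_intros]:
  "(f \<longlongrightarrow> x) F \<Longrightarrow> (g \<longlongrightarrow> y) F \<Longrightarrow> ((\<lambda>k. H_inner A \<eta> \<mu> (f k) (g k)) \<longlongrightarrow> H_inner A \<eta> \<mu> x y) F"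
  unfolding H_inner_def case_prod_beta by (intro tendsto_intros)

locale H_positive =
  fixes A :: "real^'p^'p" and \<eta> \<mu> :: real
  assumes mu_pos: "\<mu> > 0"
    and eta_bound: "\<And>x. \<mu> * ((A *v x) \<bullet> (A *v x)) \<le> (\<eta> - 1) * (x \<bullet> x)"
begin

abbreviation H :: "'p triple \<Rightarrow> real" where
  "H v \<equiv> H_inner A \<eta> \<mu> v v"

lemma eta_pos: "\<eta> > 0"
proof -
  obtain i :: 'p where True by blast
  have "0 \<le> \<mu> * ((A *v axis i 1) \<bullet> (A *v axis i 1))" using mu_pos by simp
  also have "\<dots> \<le> (\<eta> - 1) * (axis i (1::real) \<bullet> axis i 1)" by (rule eta_bound)
  finally show ?thesis by (simp add: inner_axis_axis)
qed

lemma H_ge_sum_squares: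
  "\<beta> \<bullet> \<beta> + (\<mu> *\<^sub>R (A *v \<beta>) + u) \<bullet> (\<mu> *\<^sub>R (A *v \<beta>) + u) / \<mu> + (\<mu> *\<^sub>R z - u) \<bullet> (\<mu> *\<^sub>R z - u) / \<mu>
     \<le> H (\<beta>, z, u)"
proof -
  have P: "(\<mu> *\<^sub>R (A *v \<beta>) + u) \<bullet> (\<mu> *\<^sub>R (A *v \<beta>) + u) / \<mu>
      = \<mu> * ((A *v \<beta>) \<bullet> (A *v \<beta>)) + 2 * (u \<bullet> (A *v \<beta>)) + (u \<bullet> u) / \<mu>"
    using mu_pos by (simp add: inner_add_left inner_add_right inner_commute field_simps power2_eq_square)
  have Q: "(\<mu> *\<^sub>R z - u) \<bullet> (\<mu> *\<^sub>R z - u) / \<mu> = \<mu> * (z \<bullet> z) - 2 * (z \<bullet> u) + (u \<bullet> u) / \<mu>"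
    using mu_pos by (simp add: inner_diff_left inner_diff_right inner_commute field_simps power2_eq_square)
  have "H (\<beta>, z, u) = \<eta> * (\<beta> \<bullet> \<beta>) + 2 * (u \<bullet> (A *v \<beta>)) + \<mu> * (z \<bullet> z) - 2 * (z \<bullet> u) + 2 * ((u \<bullet> u) / \<mu>)"
    unfolding H_inner_def by (simp add: inner_commute)
  moreover have "\<mu> * ((A *v \<beta>) \<bullet> (A *v \<beta>)) \<le> \<eta> * (\<beta> \<bullet> \<beta>) - \<beta> \<bullet> \<beta>"
    using eta_bound[of \<beta>] by (simp add: algebra_simps)
  ultimately show ?thesis using P Q by linarith
qed

lemma H_pos: "g \<noteq> 0 \<Longrightarrow> H g > 0"
proof (cases g)
  case (fields \<beta> z u)
  define P where "P = (\<mu> *\<^sub>R (A *v \<beta>) + u) \<bullet> (\<mu> *\<^sub>R (A *v \<beta>) + u)"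
  define Q where "Q = (\<mu> *\<^sub>R z - u) \<bullet> (\<mu> *\<^sub>R z - u)"
  assume "g \<noteq> 0"
  have le: "\<beta> \<bullet> \<beta> + P / \<mu> + Q / \<mu> \<le> H g"
    unfolding fields P_def Q_def by (rule H_ge_sum_squares)
  show "H g > 0"
  proof (rule ccontr)
    assume "\<not> H g > 0"
    moreover have "P \<ge> 0" "Q \<ge> 0" "\<beta> \<bullet> \<beta> \<ge> 0" unfolding P_def Q_def by simp_all
    moreover have "P / \<mu> \<ge> 0" "Q / \<mu> \<ge> 0" using calculation(2,3) mu_pos by simp_all
    ultimately have "\<beta> \<bullet> \<beta> = 0" "P / \<mu> = 0" "Q / \<mu> = 0" using le by linarith+
    then have "\<beta> = 0" "P = 0" "Q = 0" using mu_pos by simp_all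
    then have "\<beta> = 0" "u = 0" "z = 0" using mu_pos unfolding P_def Q_def by simp_all
    then show False using \<open>g \<noteq> 0\<close> fields by (simp add: zero_prod_def)
  qed
qed

lemma H_nonneg: "H g \<ge> 0"
  using H_pos[of g] by (cases "g = 0") auto

lemma H_coercive: "\<exists>m>0. \<forall>g. m * (norm g)\<^sup>2 \<le> H g"
proof -
  have "continuous_on UNIV (\<lambda>g. - H g)" by (intro continuous_intros)
  then obtain v where v: "norm v = 1" and le: "\<And>g. - H g \<le> - H v * (norm g)\<^sup>2"
    using le_max_on_sphere_if_degree2_homogeneous[of "\<lambda>g. - H g"] by (auto simp: H_inner_scaleR)
  have "H v * (norm g)\<^sup>2 \<le> H g" for g using le[of g] by simp
  moreover have "H v > 0" using v by (intro H_pos) auto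
  ultimately show ?thesis by (intro exI[where x = "H v"] conjI allI)
qed

lemma norm_le_sqrt_H: "\<exists>m>0. \<forall>g. norm g \<le> sqrt (H g / m)"
proof -
  obtain m where m: "m > 0" "\<And>g. m * (norm g)\<^sup>2 \<le> H g" using H_coercive by blast
  have "norm g \<le> sqrt (H g / m)" for g
    using m by (intro real_le_rsqrt) (simp add: field_simps mult.commute)
  with m(1) show ?thesis by blast
qed

lemma tendsto_zero_if_H_tendsto_zero:
  assumes "(\<lambda>t. H (f t)) \<longlonglongrightarrow> 0"
  shows "f \<longlonglongrightarrow> 0"
proof -
  obtain m where m: "m > 0" "\<And>g. norm g \<le> sqrt (H g / m)"
    using norm_le_sqrt_H by blast
  show ?thesis
  proof (rule Lim_null_comparison)
    show "\<forall>\<^sub>F t in sequentially. norm (f t) \<le> sqrt (H (f t) / m)"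
      using m(2) by (intro always_eventually allI)
    have "(\<lambda>t. sqrt (H (f t) / m)) \<longlonglongrightarrow> sqrt (0 / m)"
      using m(1) by (intro tendsto_intros assms) simp
    then show "(\<lambda>t. sqrt (H (f t) / m)) \<longlonglongrightarrow> 0" by simp
  qed
qed

end

section \<open>The variational inequality of a step\<close>

definition lin_admm_step ::
  "real^'p^'p \<Rightarrow> real^'p \<Rightarrow> real \<Rightarrow> real \<Rightarrow> real \<Rightarrow> 'p triple \<Rightarrow> 'p triple \<Rightarrow> bool" where
  "lin_admm_step A b \<eta> \<mu> c = (\<lambda>(\<beta>, z, u) (\<beta>', z', u').
     \<beta>' = soft_thr (1 / \<eta>) (\<beta> + (1 / \<eta>) *\<^sub>R (transpose A *v u)) \<and>
     z' = clip c (z - (1 / \<mu>) *\<^sub>R u) \<and>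
     u' = u - (\<mu> / 2) *\<^sub>R (2 *\<^sub>R (A *v \<beta>' - z' - b) - (A *v \<beta> - z - b)))"

definition saddle_point :: "real^'p^'p \<Rightarrow> real^'p \<Rightarrow> real \<Rightarrow> 'p triple \<Rightarrow> bool" where
  "saddle_point A b c = (\<lambda>(\<beta>, z, u). z \<in> Z0 c \<and> A *v \<beta> - z - b = 0 \<and>
     (\<forall>\<beta>' z'. z' \<in> Z0 c \<longrightarrow> l1_norm \<beta> \<le> l1_norm \<beta>' - u \<bullet> (A *v \<beta>' - z' - b)))"

text \<open>\<open>vi_gap A b w w'\<close> is \<open>\<theta>(w) - \<theta>(w') + (w - w') \<bullet> F(w')\<close> for the objective
  \<open>\<theta>(\<beta>, z, u) = |\<beta>|\<^sub>1\<close> and the affine operator \<open>F(\<beta>, z, u) = (- A\<^sup>T u, u, A \<beta> - z - b)\<close>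
  of the variational inequality characterising saddle points.\<close>

definition vi_gap :: "real^'p^'p \<Rightarrow> real^'p \<Rightarrow> 'p triple \<Rightarrow> 'p triple \<Rightarrow> real" where
  "vi_gap A b = (\<lambda>(\<beta>, z, u) (\<beta>', z', u').
     l1_norm \<beta> - l1_norm \<beta>' - u' \<bullet> (A *v (\<beta> - \<beta>')) + (z - z') \<bullet> u' + (u - u') \<bullet> (A *v \<beta>' - z' - b))"

lemma vi_gap_antisym: "vi_gap A b x y = - vi_gap A b y x"
  unfolding vi_gap_def
  by (simp add: case_prod_beta inner_diff_left inner_diff_right matrix_vector_mult_diff_distrib
      algebra_simps inner_commute)

lemma tendsto_vi_gap [tendsto_intros]:
  "(f \<longlongrightarrow> x) F \<Longrightarrow> ((\<lambda>k. vi_gap A b w (f k)) \<longlongrightarrow> vi_gap A b w x) F"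
  unfolding vi_gap_def l1_norm_def case_prod_beta by (intro tendsto_intros)

lemma vi_gap_nonpos_if_saddle_point:
  assumes "saddle_point A b c w" and "fst (snd w') \<in> Z0 c"
  shows "vi_gap A b w w' \<le> 0"
proof -
  obtain \<beta> z u where w: "w = (\<beta>, z, u)" by (cases w)
  obtain \<beta>' z' u' where w': "w' = (\<beta>', z', u')" by (cases w')
  have feasible: "A *v \<beta> - z - b = 0" and opt: "l1_norm \<beta> \<le> l1_norm \<beta>' - u \<bullet> (A *v \<beta>' - z' - b)"
    using assms unfolding saddle_point_def w w' by auto
  from feasible have "A *v \<beta> = z + b" by (simp add: algebra_simps)
  then have "vi_gap A b w w' = l1_norm \<beta> - l1_norm \<beta>' + u \<bullet> (A *v \<beta>' - z' - b)"
    unfolding vi_gap_def w w'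
    by (simp add: matrix_vector_mult_diff_distrib inner_diff_left inner_diff_right
        inner_add_left inner_add_right algebra_simps inner_commute)
  then show ?thesis using opt by simp
qed

lemma saddle_point_if_vi_gap_nonneg:
  assumes z: "fst (snd w) \<in> Z0 c"
    and gap: "\<And>w'. fst (snd w') \<in> Z0 c \<Longrightarrow> vi_gap A b w' w \<ge> 0"
  shows "saddle_point A b c w"
proof -
  obtain \<beta> z u where w: "w = (\<beta>, z, u)" by (cases w)
  define r where "r = A *v \<beta> - z - b"
  have "vi_gap A b (\<beta>, z, u - r) w = - (r \<bullet> r)"
    unfolding vi_gap_def w r_def
    by (simp add: inner_diff_left inner_diff_right inner_add_left inner_add_right inner_commute algebra_simps)
  then have "r \<bullet> r \<le> 0" using gap[of "(\<beta>, z, u - r)"] z w by simp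
  then have r0: "r = 0" by (metis antisym inner_ge_zero inner_eq_zero_iff)
  have "l1_norm \<beta> \<le> l1_norm \<beta>' - u \<bullet> (A *v \<beta>' - z' - b)" if "z' \<in> Z0 c" for \<beta>' z'
  proof -
    have "vi_gap A b (\<beta>', z', u) w = l1_norm \<beta>' - l1_norm \<beta> - u \<bullet> (A *v \<beta>' - z' - b - r)"
      unfolding vi_gap_def w r_def
      by (simp add: matrix_vector_mult_diff_distrib inner_diff_left inner_diff_right algebra_simps inner_commute)
    then show ?thesis using gap[of "(\<beta>', z', u)"] that r0 by simp
  qed
  then show ?thesis using z r0 unfolding saddle_point_def w r_def by simp
qed

lemma vi_gap_minus_H_inner:
  "vi_gap A b (\<beta>h, zh, uh) (\<beta>', z', u')
      - H_inner A \<eta> \<mu> ((\<beta>', z', u') - (\<beta>h, zh, uh)) ((\<beta>', z', u') - (\<beta>, z, u))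
   = (l1_norm \<beta>h - l1_norm \<beta>' - (\<beta>h - \<beta>') \<bullet> (transpose A *v u + \<eta> *\<^sub>R (\<beta> - \<beta>')))
     + (zh - z') \<bullet> (u + \<mu> *\<^sub>R (z' - z))
     + (uh - u') \<bullet> ((A *v \<beta>' - z' - b) + (2 / \<mu>) *\<^sub>R (u' - u) + A *v (\<beta>' - \<beta>) - (z' - z))"
  unfolding vi_gap_def H_inner_def
  by (simp add: inner_diff_left inner_diff_right inner_add_left inner_add_right inner_vector_matrix
      matrix_vector_mult_diff_distrib matrix_vector_right_distrib matrix_vector_mult_scaleR)
    (simp add: algebra_simps inner_commute vector_mult_2 diff_divide_distrib add_divide_distrib)

text \<open>The three summands on the right of \<open>vi_gap_minus_H_inner\<close> are the optimality
  conditions of the \<open>\<beta>\<close>-, \<open>z\<close>- and \<open>u\<close>-updates: the first two are nonnegative by the prox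
  and projection inequalities, the third vanishes.\<close>

lemma lin_admm_step_vi:
  assumes eta: "\<eta> > 0" and mu: "\<mu> > 0" and step: "lin_admm_step A b \<eta> \<mu> c g g'"
    and z: "fst (snd w) \<in> Z0 c"
  shows "H_inner A \<eta> \<mu> (g' - w) (g' - g) \<le> vi_gap A b w g'"
proof -
  obtain \<beta> z u where g: "g = (\<beta>, z, u)" by (cases g)
  obtain \<beta>' z' u' where g': "g' = (\<beta>', z', u')" by (cases g')
  obtain \<beta>h zh uh where w: "w = (\<beta>h, zh, uh)" by (cases w)
  define v where "v = \<beta> + (1 / \<eta>) *\<^sub>R (transpose A *v u)"
  define x where "x = z - (1 / \<mu>) *\<^sub>R u"
  have \<beta>': "\<beta>' = soft_thr (1 / \<eta>) v" and z': "z' = clip c x"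
    and u': "u' = u - (\<mu> / 2) *\<^sub>R (2 *\<^sub>R (A *v \<beta>' - z' - b) - (A *v \<beta> - z - b))"
    using step unfolding lin_admm_step_def g g' v_def x_def by auto
  have "(\<beta>h - \<beta>') \<bullet> (v - \<beta>') \<le> (1 / \<eta>) * (l1_norm \<beta>h - l1_norm \<beta>')"
    unfolding \<beta>' by (rule soft_thr_prox) (use eta in simp)
  moreover have "transpose A *v u + \<eta> *\<^sub>R (\<beta> - \<beta>') = \<eta> *\<^sub>R (v - \<beta>')"
    unfolding v_def using eta by (simp add: algebra_simps)
  ultimately have opt_\<beta>: "l1_norm \<beta>h - l1_norm \<beta>' - (\<beta>h - \<beta>') \<bullet> (transpose A *v u + \<eta> *\<^sub>R (\<beta> - \<beta>')) \<ge> 0"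
    using eta by (simp only: inner_scaleR_right) (simp add: field_simps)
  have "(zh - z') \<bullet> (x - z') \<le> 0"
    unfolding z' by (rule clip_projection) (use z w in simp)
  moreover have "u + \<mu> *\<^sub>R (z' - z) = - \<mu> *\<^sub>R (x - z')"
    unfolding x_def using mu by (simp add: algebra_simps)
  ultimately have opt_z: "(zh - z') \<bullet> (u + \<mu> *\<^sub>R (z' - z)) \<ge> 0"
    using mu by (simp add: mult_le_0_iff)
  have "(2 / \<mu>) *\<^sub>R (u' - u) = (A *v \<beta> - z - b) - 2 *\<^sub>R (A *v \<beta>' - z' - b)"
    unfolding u' using mu by simp
  then have opt_u: "(A *v \<beta>' - z' - b) + (2 / \<mu>) *\<^sub>R (u' - u) + A *v (\<beta>' - \<beta>) - (z' - z) = 0"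
    by (simp add: vec_eq_iff matrix_vector_mult_diff_distrib algebra_simps)
  show ?thesis
    using vi_gap_minus_H_inner[of A b \<beta>h zh uh \<beta>' z' u' \<eta> \<mu> \<beta> z u] opt_\<beta> opt_z opt_u
    unfolding g g' w by simp
qed

section \<open>Convergence of the iteration\<close>

lemma decseq_tendsto_if_subseq_tendsto:
  fixes V :: "nat \<Rightarrow> real"
  assumes "decseq V" "\<And>n. B \<le> V n" "strict_mono r" "(V \<circ> r) \<longlonglongrightarrow> l"
  shows "V \<longlonglongrightarrow> l"
proof -
  obtain L where L: "V \<longlonglongrightarrow> L" using decseq_convergent[OF assms(1)] assms(2) by blast
  then have "(V \<circ> r) \<longlonglongrightarrow> L" using assms(3) by (rule LIMSEQ_subseq_LIMSEQ)
  then have "L = l" using assms(4) by (rule LIMSEQ_unique)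
  with L show ?thesis by simp
qed

locale lin_admm = H_positive A \<eta> \<mu> for A :: "real^'p^'p" and \<eta> \<mu> :: real +
  fixes b :: "real^'p" and c :: real and g :: "nat \<Rightarrow> 'p triple"
  assumes c_nonneg: "c \<ge> 0"
    and steps: "\<And>t. lin_admm_step A b \<eta> \<mu> c (g t) (g (Suc t))"
begin

lemma iterate_in_Z0: "fst (snd (g (Suc t))) \<in> Z0 c"
  using steps[of t] c_nonneg unfolding lin_admm_step_def by (auto simp: case_prod_beta clip_in_Z0)

lemma iterate_vi:
  "fst (snd w) \<in> Z0 c \<Longrightarrow> H_inner A \<eta> \<mu> (g (Suc t) - w) (g (Suc t) - g t) \<le> vi_gap A b w (g (Suc t))"
  by (rule lin_admm_step_vi[OF eta_pos mu_pos steps])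

lemma fejer_step:
  assumes "saddle_point A b c w"
  shows "H (g (Suc t) - w) + H (g (Suc t) - g t) \<le> H (g t - w)"
proof -
  have "fst (snd w) \<in> Z0 c" using assms by (auto simp: saddle_point_def case_prod_beta)
  then have "H_inner A \<eta> \<mu> (g (Suc t) - w) (g (Suc t) - g t) \<le> 0"
    using iterate_vi vi_gap_nonpos_if_saddle_point[OF assms iterate_in_Z0] order_trans by blast
  moreover have "g t - w = (g (Suc t) - w) - (g (Suc t) - g t)" by simp
  ultimately show ?thesis using H_inner_square_diff[of A \<eta> \<mu> "g (Suc t) - w" "g (Suc t) - g t"] by simp
qed

text \<open>Adding the variational inequalities of two consecutive steps, the gap terms cancel by
  antisymmetry.\<close>

lemma H_step_decreasing: "H (g (Suc (Suc t)) - g (Suc t)) \<le> H (g (Suc t) - g t)"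
proof -
  define D where "D = g (Suc (Suc t)) - g (Suc t)"
  define d where "d = g (Suc t) - g t"
  have "H D \<le> vi_gap A b (g (Suc t)) (g (Suc (Suc t)))"
    using iterate_vi[OF iterate_in_Z0[of t], of "Suc t"] unfolding D_def by simp
  moreover have "H_inner A \<eta> \<mu> (- D) d \<le> vi_gap A b (g (Suc (Suc t))) (g (Suc t))"
    using iterate_vi[OF iterate_in_Z0[of "Suc t"], of t] unfolding D_def d_def by simp
  ultimately have "H D \<le> H_inner A \<eta> \<mu> D d"
    using vi_gap_antisym[of A b "g (Suc t)" "g (Suc (Suc t))"] H_inner_minus_left[of A \<eta> \<mu> D d]
    by linarith
  moreover have "H (d - D) \<ge> 0" by (rule H_nonneg)
  ultimately show ?thesis
    using H_inner_square_diff[of A \<eta> \<mu> d D] H_inner_commute[of A \<eta> \<mu> d D]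
    unfolding D_def d_def by linarith
qed

lemma sum_H_steps_le:
  assumes "saddle_point A b c w"
  shows "(\<Sum>s<n. H (g (Suc s) - g s)) + H (g n - w) \<le> H (g 0 - w)"
proof (induction n)
  case (Suc n)
  then show ?case using fejer_step[OF assms, of n] by simp
qed simp

lemma H_step_rate:
  assumes "saddle_point A b c w"
  shows "H (g (Suc T) - g T) \<le> H (g 0 - w) / real (T + 1)"
proof -
  have mono: "H (g (Suc T) - g T) \<le> H (g (Suc s) - g s)" if "s \<le> T" for s
    using that
  proof (induction T rule: dec_induct)
    case (step n)
    then show ?case using H_step_decreasing[of n] by linarith
  qed simp
  have "real (T + 1) * H (g (Suc T) - g T) = (\<Sum>s<T + 1. H (g (Suc T) - g T))" by simp
  also have "\<dots> \<le> (\<Sum>s<T + 1. H (g (Suc s) - g s))" by (intro sum_mono mono) simp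
  also have "\<dots> \<le> H (g 0 - w)"
    using sum_H_steps_le[OF assms, of "T + 1"] H_nonneg[of "g (T + 1) - w"] by linarith
  finally show ?thesis by (simp add: field_simps)
qed

lemma decseq_H_dist:
  assumes "saddle_point A b c w"
  shows "decseq (\<lambda>t. H (g t - w))"
proof (rule decseq_SucI)
  show "H (g (Suc t) - w) \<le> H (g t - w)" for t
    using fejer_step[OF assms, of t] H_nonneg[of "g (Suc t) - g t"] by linarith
qed

lemma bounded_iterates:
  assumes "saddle_point A b c w"
  shows "bounded (range g)"
proof -
  obtain m where m: "m > 0" "\<And>v. norm v \<le> sqrt (H v / m)" using norm_le_sqrt_H by blast
  have near: "norm (g t - w) \<le> sqrt (H (g 0 - w) / m)" for t
  proof -
    have "H (g t - w) \<le> H (g 0 - w)" using decseq_H_dist[OF assms] by (simp add: decseq_def)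
    then have "sqrt (H (g t - w) / m) \<le> sqrt (H (g 0 - w) / m)"
      using m(1) by (intro real_sqrt_le_mono divide_right_mono) auto
    with m(2)[of "g t - w"] show ?thesis by linarith
  qed
  have "norm (g t) \<le> norm w + sqrt (H (g 0 - w) / m)" for t
    using norm_triangle_sub[of "g t" w] near[of t] by linarith
  then show ?thesis unfolding bounded_iff by blast
qed

lemma steps_tendsto_zero:
  assumes "saddle_point A b c w"
  shows "(\<lambda>t. g (Suc t) - g t) \<longlonglongrightarrow> 0"
proof (rule tendsto_zero_if_H_tendsto_zero, rule Lim_null_comparison)
  show "\<forall>\<^sub>F t in sequentially. norm (H (g (Suc t) - g t)) \<le> H (g 0 - w) * inverse (real (Suc t))"
  proof (intro always_eventually allI)
    fix t
    have "norm (H (g (Suc t) - g t)) = H (g (Suc t) - g t)" using H_nonneg by simp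
    also have "\<dots> \<le> H (g 0 - w) / real (t + 1)" by (rule H_step_rate[OF assms])
    finally show "norm (H (g (Suc t) - g t)) \<le> H (g 0 - w) * inverse (real (Suc t))"
      by (simp add: divide_inverse)
  qed
  show "(\<lambda>t. H (g 0 - w) * inverse (real (Suc t))) \<longlonglongrightarrow> 0"
    by (rule tendsto_mult_right_zero[OF LIMSEQ_inverse_real_of_nat])
qed

lemma saddle_point_if_subseq_tendsto:
  assumes w: "saddle_point A b c w" and r: "strict_mono r" and lim: "(g \<circ> r) \<longlonglongrightarrow> l"
  shows "saddle_point A b c l"
proof (rule saddle_point_if_vi_gap_nonneg)
  have d: "(\<lambda>k. g (Suc (r k)) - g (r k)) \<longlonglongrightarrow> 0"
    using LIMSEQ_subseq_LIMSEQ[OF steps_tendsto_zero[OF w] r] by (simp add: o_def)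
  have "(\<lambda>k. g (r k) + (g (Suc (r k)) - g (r k))) \<longlonglongrightarrow> l + 0"
    using lim d by (intro tendsto_add) (simp_all add: o_def)
  then have lim1: "(\<lambda>k. g (Suc (r k))) \<longlonglongrightarrow> l" by simp
  show "fst (snd l) \<in> Z0 c"
    using closed_sequentially[OF closed_Z0, of "\<lambda>k. fst (snd (g (Suc (r k))))"] iterate_in_Z0
      tendsto_fst[OF tendsto_snd[OF lim1]] by blast
  show "vi_gap A b w' l \<ge> 0" if "fst (snd w') \<in> Z0 c" for w'
  proof (rule tendsto_le[OF trivial_limit_sequentially])
    show "(\<lambda>k. vi_gap A b w' (g (Suc (r k)))) \<longlonglongrightarrow> vi_gap A b w' l" by (intro tendsto_intros lim1)
    show "(\<lambda>k. H_inner A \<eta> \<mu> (g (Suc (r k)) - w') (g (Suc (r k)) - g (r k))) \<longlonglongrightarrow> 0"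
      using tendsto_H_inner[OF tendsto_diff[OF lim1 tendsto_const] d] by simp
    show "\<forall>\<^sub>F k in sequentially. H_inner A \<eta> \<mu> (g (Suc (r k)) - w') (g (Suc (r k)) - g (r k))
        \<le> vi_gap A b w' (g (Suc (r k)))"
      using iterate_vi[OF that] by simp
  qed
qed

lemma convergent_to_saddle_point:
  assumes "saddle_point A b c w"
  obtains l where "saddle_point A b c l" "g \<longlonglongrightarrow> l"
proof -
  obtain l r where r: "strict_mono r" and lim: "(g \<circ> r) \<longlonglongrightarrow> l"
    using bounded_imp_convergent_subsequence[OF bounded_iterates[OF assms]] by blast
  have l: "saddle_point A b c l" by (rule saddle_point_if_subseq_tendsto[OF assms r lim])
  have "((\<lambda>t. H (g t - l)) \<circ> r) \<longlonglongrightarrow> H (l - l)"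
    using lim unfolding comp_def by (intro tendsto_intros) (simp add: o_def)
  then have "(\<lambda>t. H (g t - l)) \<longlonglongrightarrow> 0"
    using decseq_tendsto_if_subseq_tendsto[OF decseq_H_dist[OF l] H_nonneg r] by simp
  then have "(\<lambda>t. g t - l) \<longlonglongrightarrow> 0" by (rule tendsto_zero_if_H_tendsto_zero)
  then show thesis using l that by (simp add: LIM_zero_iff)
qed

end

section \<open>Algorithms 1 and 2\<close>

lemma eta_of_bound:
  fixes X :: "real^'p^'n"
  assumes "\<mu> \<ge> 0"
  shows "\<mu> * (((transpose X ** X) *v x) \<bullet> ((transpose X ** X) *v x)) \<le> (eta_of X \<mu> - 1) * (x \<bullet> x)"
proof -
  define A where "A = transpose X ** X"
  define M where "M = \<mu> *\<^sub>R (transpose A ** A)"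
  have "transpose M = M"
    unfolding M_def by (simp add: transpose_scalar matrix_transpose_mul)
  moreover have "x \<bullet> (M *v x) = \<mu> * ((A *v x) \<bullet> (A *v x))"
    unfolding M_def
    by (simp add: scaleR_matrix_vector_assoc[symmetric] matrix_vector_mul_assoc[symmetric] inner_vector_matrix)
  ultimately show ?thesis
    using quadratic_form_le_lambda_max[of M x] unfolding eta_of_def A_def M_def by simp
qed

lemma Hnorm2_eq_H_inner: "Hnorm2 X \<mu> g = H_inner (transpose X ** X) (eta_of X \<mu>) \<mu> g g"
proof -
  obtain \<beta> z u where g: "g = (\<beta>, z, u)" by (cases g)
  define A where "A = transpose X ** X"
  define \<eta> where "\<eta> = eta_of X \<mu>"
  have "\<mu> *\<^sub>R (transpose A ** A) + (\<eta> *\<^sub>R mat 1 - \<mu> *\<^sub>R (transpose A ** A)) = \<eta> *\<^sub>R (mat 1 :: real^'a^'a)"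
    by simp
  then show ?thesis
    unfolding Hnorm2_def Let_def g A_def[symmetric] \<eta>_def[symmetric] H_inner_def
    by (simp only: scaleR_matrix_vector_assoc[symmetric] matrix_vector_mul_lid prod.case)
      (simp add: dot_lmul_matrix inner_vector_matrix inner_commute algebra_simps)
qed

lemma saddle_set_iff_saddle_point:
  fixes X :: "real^'p^'n"
  assumes "lam \<ge> 0"
  shows "w \<in> saddle_set X y lam \<longleftrightarrow>
    saddle_point (transpose X ** X) (transpose X *v y) (real CARD('n) * lam) w"
proof -
  define A where "A = transpose X ** X"
  define b where "b = transpose X *v y"
  define c where "c = real CARD('n) * lam"
  obtain \<beta> z u where w: "w = (\<beta>, z, u)" by (cases w)
  have L: "lagr X y lam \<beta>' z' u' = (if z' \<in> Z0 c then ereal (l1_norm \<beta>' - u' \<bullet> (A *v \<beta>' - z' - b)) else \<infinity>)"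
    for \<beta>' z' u'
    unfolding lagr_def l1_norm_def A_def b_def c_def ..
  have "0 \<in> Z0 c" unfolding c_def using assms by (simp add: zero_in_Z0)
  show ?thesis
    unfolding A_def[symmetric] b_def[symmetric] c_def[symmetric]
  proof
    assume "w \<in> saddle_set X y lam"
    then have max_u: "\<And>u'. lagr X y lam \<beta> z u' \<le> lagr X y lam \<beta> z u"
      and min_\<beta>z: "\<And>\<beta>' z'. lagr X y lam \<beta> z u \<le> lagr X y lam \<beta>' z' u"
      unfolding saddle_set_def w by auto
    have z: "z \<in> Z0 c"
    proof (rule ccontr)
      assume "z \<notin> Z0 c"
      then have "lagr X y lam \<beta> z u = \<infinity>" unfolding L by simp
      moreover have "lagr X y lam \<beta> z u \<le> lagr X y lam \<beta> 0 u" by (rule min_\<beta>z)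
      ultimately show False unfolding L by (simp add: \<open>0 \<in> Z0 c\<close>)
    qed
    define r where "r = A *v \<beta> - z - b"
    \<comment> \<open>maximality in \<open>u\<close> of a function affine in \<open>u\<close> forces feasibility\<close>
    have "lagr X y lam \<beta> z (u - r) \<le> lagr X y lam \<beta> z u" by (rule max_u)
    then have "r \<bullet> r \<le> 0" unfolding L using z r_def by (simp add: inner_diff_left)
    then have r0: "r = 0" by (metis antisym inner_ge_zero inner_eq_zero_iff)
    have "l1_norm \<beta> \<le> l1_norm \<beta>' - u \<bullet> (A *v \<beta>' - z' - b)" if "z' \<in> Z0 c" for \<beta>' z'
      using min_\<beta>z[of \<beta>' z'] that z r0 unfolding L r_def by simp
    then show "saddle_point A b c w" unfolding saddle_point_def w using z r0 r_def by simp
  next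
    assume "saddle_point A b c w"
    then have "z \<in> Z0 c" "A *v \<beta> - z - b = 0"
      and "\<And>\<beta>' z'. z' \<in> Z0 c \<Longrightarrow> l1_norm \<beta> \<le> l1_norm \<beta>' - u \<bullet> (A *v \<beta>' - z' - b)"
      unfolding saddle_point_def w by auto
    then show "w \<in> saddle_set X y lam" unfolding saddle_set_def w L by auto
  qed
qed

lemma alg1_step_iff:
  fixes X :: "real^'p^'n"
  shows "alg1_step X y lam \<mu> g g' \<longleftrightarrow>
    lin_admm_step (transpose X ** X) (transpose X *v y) (eta_of X \<mu>) \<mu> (real CARD('n) * lam) g g'"
  unfolding alg1_step_def lin_admm_step_def Let_def by (simp add: case_prod_beta)

lemma sum_blk_partition:
  fixes K :: nat
  assumes disj: "\<forall>i\<in>{1..K}. \<forall>j\<in>{1..K}. i \<noteq> j \<longrightarrow> I i \<inter> I j = {}"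
    and cover: "(\<Union>i\<in>{1..K}. I i) = UNIV"
  shows "(\<Sum>i\<in>{1..K}. blk (I i) v) = v"
proof (subst vec_eq_iff, rule allI)
  fix j
  obtain i0 where i0: "i0 \<in> {1..K}" "j \<in> I i0" using cover by blast
  have "(\<Sum>i\<in>{1..K}. blk (I i) v) $ j = (\<Sum>i\<in>{1..K}. if j \<in> I i then v $ j else 0)"
    by (simp add: blk_def)
  also have "\<dots> = (\<Sum>i\<in>{1..K}. if i = i0 then v $ j else 0)"
  proof (rule sum.cong)
    show "(if j \<in> I i then v $ j else 0) = (if i = i0 then v $ j else 0)" if i: "i \<in> {1..K}" for i
    proof (cases "i = i0")
      case False
      then have "j \<notin> I i" using disj i i0 by blast
      with False show ?thesis by simp
    qed (use i0 in simp)
  qed simp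
  also have "\<dots> = v $ j" using i0 by (subst sum.delta) auto
  finally show "(\<Sum>i\<in>{1..K}. blk (I i) v) $ j = v $ j" .
qed

lemma alg2_step_imp_alg1_step:
  fixes X :: "real^'p^'n"
  assumes disj: "\<forall>i\<in>{1..K}. \<forall>j\<in>{1..K}. i \<noteq> j \<longrightarrow> I i \<inter> I j = {}"
    and cover: "(\<Union>i\<in>{1..K}. I i) = UNIV"
    and step: "alg2_step X y lam \<mu> K I g g'"
  shows "alg1_step X y lam \<mu> g g'"
proof -
  obtain \<beta> z u where g: "g = (\<beta>, z, u)" by (cases g)
  obtain \<beta>' z' u' where g': "g' = (\<beta>', z', u')" by (cases g')
  define A where "A = transpose X ** X"
  define \<tau> where "\<tau> = 1 / eta_of X \<mu>"
  have sum_blk: "(\<Sum>i\<in>{1..K}. A *v blk (I i) v) = A *v v" for v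
    by (simp only: sum_matrix_vector_mult sum_blk_partition[OF disj cover])
  have blocks: "\<forall>i\<in>{1..K}. blk (I i) \<beta>' = blk (I i) (soft_thr \<tau> (blk (I i) \<beta> + \<tau> *\<^sub>R blk (I i) (transpose A *v u)))"
    and rest: "z' = clip (real CARD('n) * lam) (z - (1 / \<mu>) *\<^sub>R u)"
      "u' = u - (\<mu> / 2) *\<^sub>R (2 *\<^sub>R ((\<Sum>i\<in>{1..K}. A *v blk (I i) \<beta>') - z' - transpose X *v y)
              - ((\<Sum>i\<in>{1..K}. A *v blk (I i) \<beta>) - z - transpose X *v y))"
    using step unfolding alg2_step_def g g' Let_def A_def[symmetric] \<tau>_def[symmetric] by auto
  have "\<beta>' = soft_thr \<tau> (\<beta> + \<tau> *\<^sub>R (transpose A *v u))"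
  proof (subst vec_eq_iff, rule allI)
    fix j
    obtain i where i: "i \<in> {1..K}" "j \<in> I i" using cover by blast
    have "blk (I i) \<beta>' $ j
        = blk (I i) (soft_thr \<tau> (blk (I i) \<beta> + \<tau> *\<^sub>R blk (I i) (transpose A *v u))) $ j"
      using blocks i by simp
    then show "\<beta>' $ j = soft_thr \<tau> (\<beta> + \<tau> *\<^sub>R (transpose A *v u)) $ j"
      using i by (simp add: blk_def soft_thr_def)
  qed
  then show ?thesis
    using rest unfolding alg1_step_def g g' Let_def A_def[symmetric] \<tau>_def[symmetric] sum_blk by simp
qed

theorem theorem2:
  fixes X :: "real^'p^'n" and y :: "real^'n" and lam \<mu> :: real
    and K :: nat and I :: "nat \<Rightarrow> 'p set"
    and g :: "nat \<Rightarrow> (real^'p) \<times> (real^'p) \<times> (real^'p)"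
  assumes lam: "lam \<ge> 0" and mu: "\<mu> > 0"
    and K: "K \<ge> 1"
    and I_ne: "\<forall>i\<in>{1..K}. I i \<noteq> {}"
    and I_disj: "\<forall>i\<in>{1..K}. \<forall>j\<in>{1..K}. i \<noteq> j \<longrightarrow> I i \<inter> I j = {}"
    and I_cover: "(\<Union>i\<in>{1..K}. I i) = UNIV"
    and alg: "(\<forall>t. alg1_step X y lam \<mu> (g t) (g (Suc t)))
              \<or> (\<forall>t. alg2_step X y lam \<mu> K I (g t) (g (Suc t)))"
    and nonempty: "saddle_set X y lam \<noteq> {}"
  shows "\<exists>gs \<in> saddle_set X y lam.
           g \<longlonglongrightarrow> gs \<and>
           (\<forall>T::nat. T > 0 \<longrightarrow>
              Hnorm2 X \<mu> (g T - g (Suc T)) \<le> Hnorm2 X \<mu> (g 0 - gs) / real (T + 1))"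
proof -
  define A where "A = transpose X ** X"
  define b where "b = transpose X *v y"
  define c where "c = real CARD('n) * lam"
  note defs = A_def b_def c_def
  have "alg1_step X y lam \<mu> (g t) (g (Suc t))" for t
    using alg alg2_step_imp_alg1_step[OF I_disj I_cover] by blast
  then interpret lin_admm A "eta_of X \<mu>" \<mu> b c g
    using mu eta_of_bound[of \<mu> X] lam unfolding alg1_step_iff defs by unfold_locales auto
  obtain w where "w \<in> saddle_set X y lam" using nonempty by blast
  then obtain l where l: "saddle_point A b c l" and lim: "g \<longlonglongrightarrow> l"
    using convergent_to_saddle_point saddle_set_iff_saddle_point[OF lam] unfolding defs by blast
  have "Hnorm2 X \<mu> (g T - g (Suc T)) \<le> Hnorm2 X \<mu> (g 0 - l) / real (T + 1)" for T
    using H_step_rate[OF l, of T] H_inner_diff_swap[of A "eta_of X \<mu>" \<mu> "g T" "g (Suc T)"]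
    unfolding Hnorm2_eq_H_inner A_def by simp
  then show ?thesis using l lim saddle_set_iff_saddle_point[OF lam] unfolding defs by blast
qed

end
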